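(* Let $n\ge 3$ and let $A=(a_{jk})$ be a real $n\times n$ matrix such that: (i) $A$ is symmetric; (ii) all off-diagonal entries of $A$ are non-positive; (iii) $A$ is irreducible, i.e. the simple graph on vertex set $\{1,\dots,n\}$ in which $j\neq k$ are adjacent if and only if $a_{jk}\neq 0$ is connected; (iv) $A\mathbf{1}=\mathbf{0}$, where $\mathbf{1}$ is the all-ones vector. Let $\mathbf{f}=(f_1,\dots,f_n)\in\mathbb{R}^n$ be arbitrary. For each $i\in\{1,\dots,n\}$ let $\mathbf{f}_i:=(f_1,\dots,f_{i-1},\,f_i-\mathbf{f}\cdot\mathbf{1},\,f_{i+1},\dots,f_n)$, and let $\mathbf{x}_i=(x_{i1},\dots,x_{in})$ be the unique solution of the linear system $A\mathbf{x}=\mathbf{f}_i$ satisfying $x_{ii}=0$. Then $$x_{12}+x_{23}+x_{31}=x_{21}+x_{32}+x_{13}.$$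
   Context: Under hypotheses (i)–(iv), $A$ is positive semidefinite of rank $n-1$ with kernel spanned by $\mathbf{1}$; since $\mathbf{f}_i\cdot\mathbf{1}=0$, the system $A\mathbf{x}=\mathbf{f}_i$ has a solution unique up to adding a multiple of $\mathbf{1}$, so the normalization $x_{ii}=0$ determines $\mathbf{x}_i$ uniquely. *)

theory Defs
  imports Complex_Main
begin

text \<open>Real n x n matrices are represented as functions nat => nat => real,
  with indices ranging over {1..n}; vectors as nat => real.\<close>

definition matrix_graph_adj :: "nat \<Rightarrow> (nat \<Rightarrow> nat \<Rightarrow> real) \<Rightarrow> nat \<Rightarrow> nat \<Rightarrow> bool" where
  "matrix_graph_adj n A j k \<longleftrightarrow> j \<in> {1..n} \<and> k \<in> {1..n} \<and> j \<noteq> k \<and> A j k \<noteq> 0"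

definition irreducible_mat :: "nat \<Rightarrow> (nat \<Rightarrow> nat \<Rightarrow> real) \<Rightarrow> bool" where
  "irreducible_mat n A \<longleftrightarrow> (\<forall>j\<in>{1..n}. \<forall>k\<in>{1..n}. (matrix_graph_adj n A)\<^sup>*\<^sup>* j k)"

definition mat_vec :: "nat \<Rightarrow> (nat \<Rightarrow> nat \<Rightarrow> real) \<Rightarrow> (nat \<Rightarrow> real) \<Rightarrow> (nat \<Rightarrow> real)" where
  "mat_vec n A x = (\<lambda>j. \<Sum>k=1..n. A j k * x k)"

definition modified_rhs :: "nat \<Rightarrow> (nat \<Rightarrow> real) \<Rightarrow> nat \<Rightarrow> (nat \<Rightarrow> real)" where
  "modified_rhs n f i = (\<lambda>j. if j = i then f j - (\<Sum>k=1..n. f k) else f j)"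

end

theory Submission
  imports Defs
begin

text \<open>Write \<open>S = f \<cdot> 1\<close>. Since \<open>A\<close> is symmetric, \<open>x\<^sub>i \<cdot> A x\<^sub>j = x\<^sub>j \<cdot> A x\<^sub>i\<close>, and expanding
  both sides with \<open>A x\<^sub>j = f\<^sub>j\<close> gives the reciprocity relation
  \<open>S (x\<^sub>i\<^sub>j - x\<^sub>j\<^sub>i) = x\<^sub>i \<cdot> f - x\<^sub>j \<cdot> f\<close>. Its right-hand side cancels in the cyclic sum over
  \<open>(1,2), (2,3), (3,1)\<close>, which settles the case \<open>S \<noteq> 0\<close>. If \<open>S = 0\<close>, all systems have the
  same right-hand side \<open>f\<close>, so \<open>x\<^sub>i - x\<^sub>1\<close> lies in the kernel of \<open>A\<close>. The quadratic form of
  \<open>A\<close> is \<open>-\<Sum>\<^sub>j\<^sub>k a\<^sub>j\<^sub>k (v\<^sub>j - v\<^sub>k)\<^sup>2 / 2\<close>, a sum of non-negative terms, so a kernel vector is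
  constant along the edges of the connected graph of \<open>A\<close>; hence \<open>x\<^sub>i\<^sub>j = x\<^sub>1\<^sub>j - x\<^sub>1\<^sub>i\<close>, and
  the identity telescopes.\<close>

lemma mat_vec_diff:
  "mat_vec n A (\<lambda>k. u k - w k) j = mat_vec n A u j - mat_vec n A w j"
  by (simp add: mat_vec_def algebra_simps sum_subtractf)

lemma inner_mat_vec_commute:
  assumes sym: "\<forall>j\<in>{1..n}. \<forall>k\<in>{1..n}. A j k = A k j"
  shows "(\<Sum>j=1..n. u j * mat_vec n A w j) = (\<Sum>j=1..n. w j * mat_vec n A u j)"
proof -
  have "(\<Sum>j=1..n. u j * mat_vec n A w j) = (\<Sum>j=1..n. \<Sum>k=1..n. u j * A j k * w k)"
    by (simp add: mat_vec_def sum_distrib_left mult.assoc)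
  also have "\<dots> = (\<Sum>k=1..n. \<Sum>j=1..n. w k * A k j * u j)"
    by (subst sum.swap) (intro sum.cong refl, simp add: sym)
  also have "\<dots> = (\<Sum>j=1..n. w j * mat_vec n A u j)"
    by (simp add: mat_vec_def sum_distrib_left mult.assoc)
  finally show ?thesis .
qed

lemma laplacian_quadratic_form:
  assumes sym: "\<forall>j\<in>{1..n}. \<forall>k\<in>{1..n}. A j k = A k j"
    and rowsum: "\<forall>j\<in>{1..n}. (\<Sum>k=1..n. A j k) = 0"
  shows "(\<Sum>j=1..n. \<Sum>k=1..n. - A j k * (v j - v k)\<^sup>2) = 2 * (\<Sum>j=1..n. v j * mat_vec n A v j)"
proof -
  have rows: "(\<Sum>j=1..n. \<Sum>k=1..n. A j k * (v j)\<^sup>2) = 0"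
    using rowsum by (simp add: sum_distrib_right[symmetric])
  have cols: "(\<Sum>j=1..n. \<Sum>k=1..n. A j k * (v k)\<^sup>2) = 0"
  proof -
    have "(\<Sum>j=1..n. \<Sum>k=1..n. A j k * (v k)\<^sup>2) = (\<Sum>k=1..n. \<Sum>j=1..n. A k j * (v k)\<^sup>2)"
      by (subst sum.swap) (intro sum.cong refl, simp add: sym)
    also have "\<dots> = 0"
      using rowsum by (simp add: sum_distrib_right[symmetric])
    finally show ?thesis .
  qed
  have "(\<Sum>j=1..n. \<Sum>k=1..n. - A j k * (v j - v k)\<^sup>2) =
      2 * (\<Sum>j=1..n. \<Sum>k=1..n. A j k * v j * v k)
      - (\<Sum>j=1..n. \<Sum>k=1..n. A j k * (v j)\<^sup>2) - (\<Sum>j=1..n. \<Sum>k=1..n. A j k * (v k)\<^sup>2)"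
    by (simp add: power2_eq_square algebra_simps sum.distrib sum_subtractf sum_distrib_left)
  also have "\<dots> = 2 * (\<Sum>j=1..n. \<Sum>k=1..n. A j k * v j * v k)"
    using rows cols by simp
  also have "\<dots> = 2 * (\<Sum>j=1..n. v j * mat_vec n A v j)"
    by (simp add: mat_vec_def sum_distrib_left algebra_simps)
  finally show ?thesis .
qed

lemma kernel_vector_constant:
  assumes sym: "\<forall>j\<in>{1..n}. \<forall>k\<in>{1..n}. A j k = A k j"
    and offdiag: "\<forall>j\<in>{1..n}. \<forall>k\<in>{1..n}. j \<noteq> k \<longrightarrow> A j k \<le> 0"
    and irred: "irreducible_mat n A"
    and rowsum: "\<forall>j\<in>{1..n}. (\<Sum>k=1..n. A j k) = 0"
    and kernel: "\<forall>j\<in>{1..n}. mat_vec n A v j = 0"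
    and jk: "j \<in> {1..n}" "k \<in> {1..n}"
  shows "v j = v k"
proof -
  define q where "q a b = - A a b * (v a - v b)\<^sup>2" for a b
  have nonneg: "q a b \<ge> 0" if "a \<in> {1..n}" "b \<in> {1..n}" for a b
    using offdiag that unfolding q_def by (cases "a = b") (simp_all add: mult_nonpos_nonneg)
  have "(\<Sum>a=1..n. \<Sum>b=1..n. q a b) = 0"
    using laplacian_quadratic_form[OF sym rowsum, of v] kernel by (simp add: q_def)
  moreover have "(\<Sum>b=1..n. q a b) \<ge> 0" if "a \<in> {1..n}" for a
    by (rule sum_nonneg) (rule nonneg[OF that])
  ultimately have "(\<Sum>b=1..n. q a b) = 0" if "a \<in> {1..n}" for a
    using sum_nonneg_eq_0_iff[of "{1..n}" "\<lambda>a. \<Sum>b=1..n. q a b"] that by blast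
  then have "q a b = 0" if "a \<in> {1..n}" "b \<in> {1..n}" for a b
    using sum_nonneg_eq_0_iff[of "{1..n}" "q a"] nonneg that by blast
  then have edge: "v a = v b" if "matrix_graph_adj n A a b" for a b
    using that unfolding matrix_graph_adj_def q_def by fastforce
  have "(matrix_graph_adj n A)\<^sup>*\<^sup>* j k"
    using irred jk unfolding irreducible_mat_def by blast
  then show ?thesis
    by (induction rule: rtranclp_induct) (auto dest: edge)
qed

lemma solutions_differ_by_constant:
  assumes sym: "\<forall>j\<in>{1..n}. \<forall>k\<in>{1..n}. A j k = A k j"
    and offdiag: "\<forall>j\<in>{1..n}. \<forall>k\<in>{1..n}. j \<noteq> k \<longrightarrow> A j k \<le> 0"
    and irred: "irreducible_mat n A"
    and rowsum: "\<forall>j\<in>{1..n}. (\<Sum>k=1..n. A j k) = 0"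
    and same: "\<forall>j\<in>{1..n}. mat_vec n A u j = mat_vec n A w j"
    and jk: "j \<in> {1..n}" "k \<in> {1..n}"
  shows "u j - w j = u k - w k"
  using kernel_vector_constant[OF sym offdiag irred rowsum _ jk, of "\<lambda>k. u k - w k"] same
  by (simp add: mat_vec_diff)

lemma inner_modified_rhs:
  assumes "i \<in> {1..n}"
  shows "(\<Sum>j=1..n. u j * modified_rhs n f i j) = (\<Sum>j=1..n. u j * f j) - u i * (\<Sum>k=1..n. f k)"
proof -
  have "(\<Sum>j=1..n. u j * modified_rhs n f i j)
      = (\<Sum>j=1..n. u j * f j - (if j = i then u j * (\<Sum>k=1..n. f k) else 0))"
    by (intro sum.cong refl) (simp add: modified_rhs_def algebra_simps)
  then show ?thesis
    using assms by (simp add: sum_subtractf)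
qed

lemma modified_rhs_sum_zero:
  "(\<Sum>k=1..n. f k) = 0 \<Longrightarrow> modified_rhs n f i = f"
  by (simp add: modified_rhs_def fun_eq_iff)

lemma solution_reciprocity:
  assumes sym: "\<forall>j\<in>{1..n}. \<forall>k\<in>{1..n}. A j k = A k j"
    and ij: "i \<in> {1..n}" "j \<in> {1..n}"
    and sol_u: "\<forall>k\<in>{1..n}. mat_vec n A u k = modified_rhs n f i k"
    and sol_w: "\<forall>k\<in>{1..n}. mat_vec n A w k = modified_rhs n f j k"
  shows "(\<Sum>k=1..n. f k) * (u j - w i) = (\<Sum>k=1..n. u k * f k) - (\<Sum>k=1..n. w k * f k)"
proof -
  have "(\<Sum>k=1..n. u k * modified_rhs n f j k) = (\<Sum>k=1..n. w k * modified_rhs n f i k)"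
    using inner_mat_vec_commute[OF sym, of u w] sol_u sol_w by simp
  then show ?thesis
    using inner_modified_rhs[OF ij(1), of w f] inner_modified_rhs[OF ij(2), of u f]
    by (simp add: algebra_simps)
qed

theorem mainTheorem1:
  fixes n :: nat and A :: "nat \<Rightarrow> nat \<Rightarrow> real" and f :: "nat \<Rightarrow> real"
    and x :: "nat \<Rightarrow> nat \<Rightarrow> real"
  assumes n3: "n \<ge> 3"
    and sym: "\<forall>j\<in>{1..n}. \<forall>k\<in>{1..n}. A j k = A k j"
    and offdiag: "\<forall>j\<in>{1..n}. \<forall>k\<in>{1..n}. j \<noteq> k \<longrightarrow> A j k \<le> 0"
    and irred: "irreducible_mat n A"
    and rowsum: "\<forall>j\<in>{1..n}. (\<Sum>k=1..n. A j k) = 0"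
    and sol: "\<forall>i\<in>{1..n}. \<forall>j\<in>{1..n}. mat_vec n A (x i) j = modified_rhs n f i j"
    and norm: "\<forall>i\<in>{1..n}. x i i = 0"
  shows "x 1 2 + x 2 3 + x 3 1 = x 2 1 + x 3 2 + x 1 3"
proof (cases "(\<Sum>k=1..n. f k) = 0")
  case False
  have recip: "(\<Sum>k=1..n. f k) * (x i j - x j i) = (\<Sum>k=1..n. x i k * f k) - (\<Sum>k=1..n. x j k * f k)"
    if "i \<in> {1..n}" "j \<in> {1..n}" for i j
    using solution_reciprocity[OF sym that] sol that by blast
  have "(\<Sum>k=1..n. f k) * ((x 1 2 + x 2 3 + x 3 1) - (x 2 1 + x 3 2 + x 1 3)) = 0"
    using recip[of 1 2] recip[of 2 3] recip[of 3 1] n3 by (simp add: algebra_simps)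
  then show ?thesis
    using False by simp
next
  case True
  have shift: "x i j = x 1 j - x 1 i" if "i \<in> {1..n}" "j \<in> {1..n}" for i j
  proof -
    have "\<forall>k\<in>{1..n}. mat_vec n A (x i) k = mat_vec n A (x 1) k"
      using sol that n3 by (simp add: modified_rhs_sum_zero[OF True])
    then have "x i j - x 1 j = x i i - x 1 i"
      by (rule solutions_differ_by_constant[OF sym offdiag irred rowsum _ that(2,1)])
    then show ?thesis
      using norm that by simp
  qed
  show ?thesis
    using shift[of 2 3] shift[of 3 1] shift[of 3 2] shift[of 2 1] n3 norm by simp
qed

end
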